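(* Consider clipped ADOPT with $\beta_1,\beta_2\in[0,1)$, $\epsilon>0$, learning rates $\alpha_t>0$, clipping values $c_t\ge0$, and deterministic $\theta_0$: $m_0=0$, $v_0=g_0\odot g_0$, and for $t\ge1$, $$m_t=\beta_1m_{t-1}+(1-\beta_1)\,\mathrm{Clip}\Big(\frac{g_t}{\max\{\sqrt{v_{t-1}},\epsilon\}},c_t\Big),\quad\theta_t=\theta_{t-1}-\alpha_tm_t,\quad v_t=\beta_2v_{t-1}+(1-\beta_2)g_t\odot g_t,$$ where $g_0,g_1,\dots$ are random vectors in $\mathbb{R}^D$ with $\mathbb{E}\|g_t\|^2\le G^2$ for all $t\ge0$. Then for all $t\ge0$, $$\mathbb{E}\big[\|m_t\|\big]\le\frac{\sqrt2\,G}{\epsilon}.$$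
   Context: For $a\in\mathbb{R}^D$ and $c\ge0$, $\mathrm{Clip}(a,c)_i=\min\{\max\{a_i,-c\},c\}$. Norms are Euclidean; $\odot$, square root, division and $\max\{\cdot,\epsilon\}$ act elementwise. *)

theory Defs
  imports "HOL-Probability.Probability"
begin

definition clip_vec :: "real^'d \<Rightarrow> real \<Rightarrow> real^'d" where
  "clip_vec a c = (\<chi> i. min (max (a $ i) (- c)) c)"

fun adopt_v :: "real \<Rightarrow> (nat \<Rightarrow> real^'d) \<Rightarrow> nat \<Rightarrow> real^'d" where
  "adopt_v b2 g 0 = (\<chi> i. g 0 $ i * g 0 $ i)"
| "adopt_v b2 g (Suc t) =
     (\<chi> i. b2 * adopt_v b2 g t $ i + (1 - b2) * (g (Suc t) $ i * g (Suc t) $ i))"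

fun adopt_m :: "real \<Rightarrow> real \<Rightarrow> real \<Rightarrow> (nat \<Rightarrow> real) \<Rightarrow> (nat \<Rightarrow> real^'d) \<Rightarrow> nat \<Rightarrow> real^'d" where
  "adopt_m b1 b2 eps c g 0 = 0"
| "adopt_m b1 b2 eps c g (Suc t) =
     (\<chi> i. b1 * adopt_m b1 b2 eps c g t $ i
        + (1 - b1) * clip_vec (\<chi> j. g (Suc t) $ j / max (sqrt (adopt_v b2 g t $ j)) eps) (c (Suc t)) $ i)"

fun adopt_theta :: "real \<Rightarrow> real \<Rightarrow> real \<Rightarrow> (nat \<Rightarrow> real) \<Rightarrow> (nat \<Rightarrow> real) \<Rightarrow> real^'d
                     \<Rightarrow> (nat \<Rightarrow> real^'d) \<Rightarrow> nat \<Rightarrow> real^'d" where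
  "adopt_theta b1 b2 eps c alpha th0 g 0 = th0"
| "adopt_theta b1 b2 eps c alpha th0 g (Suc t) =
     adopt_theta b1 b2 eps c alpha th0 g t - alpha (Suc t) *\<^sub>R adopt_m b1 b2 eps c g (Suc t)"

end

theory Submission
  imports Defs
begin

text \<open>Clipping and the floor \<open>\<epsilon>\<close> in the denominator make every increment of \<open>m\<^sub>t\<close> have norm
  at most \<open>\<parallel>g\<^sub>t\<parallel>/\<epsilon>\<close>, so \<open>\<parallel>m\<^sub>t\<parallel>\<close> is dominated by an exponential moving average of the
  \<open>\<parallel>g\<^sub>s\<parallel>/\<epsilon>\<close>. A moving average inherits every uniform bound on the expectations of its
  inputs, and \<open>E\<parallel>g\<^sub>s\<parallel> \<le> sqrt (E\<parallel>g\<^sub>s\<parallel>\<^sup>2) \<le> G\<close> by Cauchy-Schwarz. This even gives the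
  sharper bound \<open>G/\<epsilon>\<close>.\<close>

lemma power_le_power_imp_le_ennreal:
  fixes x y :: ennreal
  assumes "x ^ n \<le> y ^ n" "n > 0"
  shows "x \<le> y"
proof (cases x; cases y)
  fix a b :: real
  assume ab: "x = ennreal a" "0 \<le> a" "y = ennreal b" "0 \<le> b"
  with assms have "a ^ n \<le> b ^ n"
    by (simp add: ennreal_power)
  then have "a \<le> b"
    using ab(2,4) assms(2) by (simp add: power_mono_iff)
  with ab show ?thesis
    by simp
qed (use assms in \<open>auto simp: ennreal_power top_unique\<close>)

lemma (in prob_space) power2_nn_integral_le:
  fixes f :: "'a \<Rightarrow> ennreal"
  assumes "f \<in> borel_measurable M"
  shows "(\<integral>\<^sup>+x. f x \<partial>M)\<^sup>2 \<le> (\<integral>\<^sup>+x. f x ^ 2 \<partial>M)"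
  using Cauchy_Schwarz_nn_integral[OF assms, of "\<lambda>_. 1"]
  by (simp add: emeasure_space_1)

lemma (in prob_space) nn_integral_norm_le_of_second_moment:
  fixes f :: "'a \<Rightarrow> 'b::real_normed_vector"
  assumes "f \<in> borel_measurable M" "0 \<le> G"
    and "(\<integral>\<^sup>+x. ennreal ((norm (f x))\<^sup>2) \<partial>M) \<le> ennreal (G\<^sup>2)"
  shows "(\<integral>\<^sup>+x. ennreal (norm (f x)) \<partial>M) \<le> ennreal G"
proof (rule power_le_power_imp_le_ennreal)
  have "(\<integral>\<^sup>+x. ennreal (norm (f x)) \<partial>M)\<^sup>2 \<le> (\<integral>\<^sup>+x. ennreal (norm (f x)) ^ 2 \<partial>M)"
    using assms(1) by (intro power2_nn_integral_le) measurable
  also have "\<dots> \<le> ennreal (G\<^sup>2)"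
    using assms(3) by (simp add: ennreal_power)
  finally show "(\<integral>\<^sup>+x. ennreal (norm (f x)) \<partial>M)\<^sup>2 \<le> (ennreal G)\<^sup>2"
    using assms(2) by (simp add: ennreal_power)
qed simp

fun moving_avg :: "real \<Rightarrow> (nat \<Rightarrow> ennreal) \<Rightarrow> nat \<Rightarrow> ennreal" where
  "moving_avg b a 0 = 0"
| "moving_avg b a (Suc t) = ennreal b * moving_avg b a t + ennreal (1 - b) * a (Suc t)"

lemma measurable_moving_avg [measurable]:
  assumes [measurable]: "\<And>s. h s \<in> borel_measurable M"
  shows "(\<lambda>x. moving_avg b (\<lambda>s. h s x) t) \<in> borel_measurable M"
  by (induction t) simp_all

lemma nn_integral_moving_avg_le:
  assumes "0 \<le> b" "b \<le> 1"
    and [measurable]: "\<And>s. h s \<in> borel_measurable M"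
    and bound: "\<And>s. (\<integral>\<^sup>+x. h s x \<partial>M) \<le> B"
  shows "(\<integral>\<^sup>+x. moving_avg b (\<lambda>s. h s x) t \<partial>M) \<le> B"
proof (induction t)
  case (Suc t)
  have "(\<integral>\<^sup>+x. moving_avg b (\<lambda>s. h s x) (Suc t) \<partial>M)
      = ennreal b * (\<integral>\<^sup>+x. moving_avg b (\<lambda>s. h s x) t \<partial>M)
        + ennreal (1 - b) * (\<integral>\<^sup>+x. h (Suc t) x \<partial>M)"
    by (simp add: nn_integral_add nn_integral_cmult)
  also have "\<dots> \<le> ennreal b * B + ennreal (1 - b) * B"
    by (intro add_mono mult_left_mono Suc bound) auto
  also have "\<dots> = B"
    using assms(1,2) by (simp flip: distrib_right ennreal_plus)
  finally show ?case .
qed simp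

lemma norm_clip_vec_le: "0 \<le> c \<Longrightarrow> norm (clip_vec a c) \<le> norm a"
  unfolding norm_vec_def clip_vec_def
  by (rule L2_set_mono) (auto simp: abs_le_iff)

lemma norm_divide_max_le:
  fixes h v :: "real^'d"
  assumes "eps > 0"
  shows "norm (\<chi> j. h $ j / max (sqrt (v $ j)) eps) \<le> norm h / eps"
proof -
  have "norm (\<chi> j. h $ j / max (sqrt (v $ j)) eps) \<le> norm ((1 / eps) *\<^sub>R h)"
    unfolding norm_vec_def
  proof (rule L2_set_mono)
    fix j
    have "\<bar>h $ j\<bar> / max (sqrt (v $ j)) eps \<le> \<bar>h $ j\<bar> / eps"
      using assms by (intro divide_left_mono) auto
    then show "norm ((\<chi> j. h $ j / max (sqrt (v $ j)) eps) $ j) \<le> norm (((1 / eps) *\<^sub>R h) $ j)"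
      using assms by (simp add: abs_div)
  qed auto
  with assms show ?thesis
    by simp
qed

lemma norm_adopt_m_Suc_le:
  assumes "0 \<le> b1" "b1 \<le> 1" "eps > 0" "0 \<le> c (Suc t)"
  shows "norm (adopt_m b1 b2 eps c g (Suc t))
    \<le> b1 * norm (adopt_m b1 b2 eps c g t) + (1 - b1) * (norm (g (Suc t)) / eps)"
proof -
  define u where "u = clip_vec (\<chi> j. g (Suc t) $ j / max (sqrt (adopt_v b2 g t $ j)) eps) (c (Suc t))"
  have "adopt_m b1 b2 eps c g (Suc t) = b1 *\<^sub>R adopt_m b1 b2 eps c g t + (1 - b1) *\<^sub>R u"
    by (simp add: u_def vec_eq_iff)
  then have "norm (adopt_m b1 b2 eps c g (Suc t)) \<le> b1 * norm (adopt_m b1 b2 eps c g t) + (1 - b1) * norm u"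
    using assms(1,2) norm_triangle_ineq[of "b1 *\<^sub>R adopt_m b1 b2 eps c g t" "(1 - b1) *\<^sub>R u"] by simp
  moreover have "norm u \<le> norm (g (Suc t)) / eps"
    unfolding u_def using norm_clip_vec_le[OF assms(4)] norm_divide_max_le[OF assms(3)] by (rule order_trans)
  ultimately show ?thesis
    using assms(2) by (smt (verit) mult_left_mono)
qed

lemma norm_adopt_m_le_moving_avg:
  assumes "0 \<le> b1" "b1 \<le> 1" "eps > 0" "\<And>t. 0 \<le> c t"
  shows "ennreal (norm (adopt_m b1 b2 eps c g t)) \<le> moving_avg b1 (\<lambda>s. ennreal (norm (g s) / eps)) t"
proof (induction t)
  case (Suc t)
  have "ennreal (norm (adopt_m b1 b2 eps c g (Suc t)))
      \<le> ennreal (b1 * norm (adopt_m b1 b2 eps c g t) + (1 - b1) * (norm (g (Suc t)) / eps))"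
    using assms by (intro ennreal_leI norm_adopt_m_Suc_le)
  also have "\<dots> = ennreal b1 * ennreal (norm (adopt_m b1 b2 eps c g t))
                  + ennreal (1 - b1) * ennreal (norm (g (Suc t)) / eps)"
    using assms(1-3) by (simp add: ennreal_plus flip: ennreal_mult)
  also have "\<dots> \<le> moving_avg b1 (\<lambda>s. ennreal (norm (g s) / eps)) (Suc t)"
    using Suc by (auto intro: add_mono mult_left_mono)
  finally show ?case .
qed simp

theorem lemmaG14:
  fixes M :: "'w measure"
    and g :: "nat \<Rightarrow> 'w \<Rightarrow> real^'d"
    and beta1 beta2 eps G :: real
    and c alpha :: "nat \<Rightarrow> real"
    and theta0 :: "real^'d"
  assumes "prob_space M"
    and "\<And>t. g t \<in> borel_measurable M"
    and "0 \<le> beta1" "beta1 < 1" "0 \<le> beta2" "beta2 < 1"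
    and "eps > 0"
    and "\<And>t. alpha t > 0"
    and "\<And>t. c t \<ge> 0"
    and "G \<ge> 0"
    and "\<And>t. (\<integral>\<^sup>+ x. ennreal ((norm (g t x))\<^sup>2) \<partial>M) \<le> ennreal (G\<^sup>2)"
  shows "\<forall>t. (\<integral>\<^sup>+ x. ennreal (norm (adopt_m beta1 beta2 eps c (\<lambda>s. g s x) t)) \<partial>M)
               \<le> ennreal (sqrt 2 * G / eps)"
proof
  fix t
  interpret prob_space M by fact
  have [measurable]: "(\<lambda>x. ennreal (norm (g s x) / eps)) \<in> borel_measurable M" for s
    using assms(2) by measurable
  have "(\<integral>\<^sup>+x. ennreal (norm (g s x) / eps) \<partial>M) \<le> ennreal (G / eps)" for s
  proof -
    have "ennreal (norm (g s x) / eps) = ennreal (1 / eps) * ennreal (norm (g s x))" for x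
      using assms(7) by (simp flip: ennreal_mult)
    then have "(\<integral>\<^sup>+x. ennreal (norm (g s x) / eps) \<partial>M) = ennreal (1 / eps) * (\<integral>\<^sup>+x. ennreal (norm (g s x)) \<partial>M)"
      using assms(2) by (simp add: nn_integral_cmult)
    also have "\<dots> \<le> ennreal (1 / eps) * ennreal G"
      using assms(2,10,11) by (intro mult_left_mono nn_integral_norm_le_of_second_moment) auto
    finally show ?thesis
      using assms(7,10) by (simp flip: ennreal_mult)
  qed
  then have "(\<integral>\<^sup>+x. moving_avg beta1 (\<lambda>s. ennreal (norm (g s x) / eps)) t \<partial>M) \<le> ennreal (G / eps)"
    using assms(3,4) by (intro nn_integral_moving_avg_le) auto
  moreover have "(\<integral>\<^sup>+ x. ennreal (norm (adopt_m beta1 beta2 eps c (\<lambda>s. g s x) t)) \<partial>M)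
      \<le> (\<integral>\<^sup>+x. moving_avg beta1 (\<lambda>s. ennreal (norm (g s x) / eps)) t \<partial>M)"
    using assms(3,4,7,9) by (intro nn_integral_mono norm_adopt_m_le_moving_avg) auto
  moreover have "G / eps \<le> sqrt 2 * G / eps"
    using assms(7,10) by (simp add: divide_right_mono mult_le_cancel_right1)
  ultimately show "(\<integral>\<^sup>+ x. ennreal (norm (adopt_m beta1 beta2 eps c (\<lambda>s. g s x) t)) \<partial>M)
               \<le> ennreal (sqrt 2 * G / eps)"
    by (meson ennreal_leI order_trans)
qed

end
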